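(* Let $X$ be a connected compact metrizable space and let $\Delta:\mathrm{C}^+_1(X)\to(0,1]$ be an order-preserving map. Then for every finite set $\mathcal F\subseteq\mathrm{C}(X)$ and every $\varepsilon>0$ there exist finite sets $\mathcal H_0,\mathcal H_1\subseteq\mathrm{C}^+_1(X)$, with $\mathcal H_0$ consisting of nonzero functions, and $\delta>0$ with the following property. Whenever $n,k,d\ge1$, $\pi_1,\dots,\pi_n:X^d\to X$ are coordinate projections (repetitions allowed), $x_1,\dots,x_k,y_1,\dots,y_k\in X$, and $\phi_0,\phi_1:\mathrm{C}(X)\to\mathrm{M}_{n+k}(\mathrm{C}(X^d))$ are the unital homomorphisms $$\phi_0(f)=\mathrm{diag}(f\circ\pi_1,\dots,f\circ\pi_n,f(x_1),\dots,f(x_k)),\quad \phi_1(f)=\mathrm{diag}(f\circ\pi_1,\dots,f\circ\pi_n,f(y_1),\dots,f(y_k)),$$ such that $\tau(\phi_0(h))>\Delta(h)$ and $\tau(\phi_1(h))>\Delta(h)$ for all $h\in\mathcal H_0$ and all $\tau\in\mathrm{T}(\mathrm{M}_{n+k}(\mathrm{C}(X^d)))$, and $|\tau(\phi_0(h)-\phi_1(h))|<\delta$ for all $h\in\mathcal H_1$ and all $\tau\in\mathrm{T}(\mathrm{M}_{n+k}(\mathrm{C}(X^d)))$, there is a unitary $u\in\mathrm{M}_{n+k}(\mathrm{C}(X^d))$ with $\|\phi_0(f)-u^*\phi_1(f)u\|<\varepsilon$ for all $f\in\mathcal F$.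
   Context: $\mathrm{C}^+_1(X)$ is the set of positive functions in $\mathrm{C}(X)$ of norm at most $1$. A coordinate projection $X^d\to X$ is a map $(z_1,\dots,z_d)\mapsto z_j$. Constants $f(x)$ are regarded as constant functions. $\mathrm{T}(B)$ denotes the tracial state space of $B$. *)

theory Defs
  imports "HOL-Analysis.Analysis"
begin

text \<open>C(X): continuous complex-valued functions on X (here X is the whole type 'a).\<close>
definition CX :: "('a::topological_space \<Rightarrow> complex) set" where
  "CX = {f. continuous_on UNIV f}"

definition C1pos :: "('a::topological_space \<Rightarrow> complex) set" where
  "C1pos = {f. continuous_on UNIV f \<and>
              (\<forall>x. Im (f x) = 0 \<and> 0 \<le> Re (f x) \<and> cmod (f x) \<le> 1)}"

definition order_preserving_on_C1pos :: "(('a::topological_space \<Rightarrow> complex) \<Rightarrow> real) \<Rightarrow> bool" where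
  "order_preserving_on_C1pos \<Delta> \<longleftrightarrow>
     (\<forall>f\<in>C1pos. \<forall>g\<in>C1pos. (\<forall>x. Im (g x - f x) = 0 \<and> 0 \<le> Re (g x - f x)) \<longrightarrow> \<Delta> f \<le> \<Delta> g)"

text \<open>X^d, realised as extensional functions on {0..<d} with the product topology.\<close>
definition XD :: "nat \<Rightarrow> (nat \<Rightarrow> 'a) set" where
  "XD d = PiE {..<d} (\<lambda>_. UNIV)"

text \<open>Elements of M_m(C(X^d)): z \<mapsto> (i,j) \<mapsto> entry, zero outside the index range / domain.\<close>
type_synonym 'a mfun = "(nat \<Rightarrow> 'a) \<Rightarrow> nat \<Rightarrow> nat \<Rightarrow> complex"

definition MC :: "nat \<Rightarrow> nat \<Rightarrow> 'a::topological_space mfun set" where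
  "MC m d = {A. (\<forall>i j. continuous_on (XD d) (\<lambda>z. A z i j)) \<and>
                (\<forall>z i j. z \<notin> XD d \<or> m \<le> i \<or> m \<le> j \<longrightarrow> A z i j = 0)}"

definition madd :: "'a mfun \<Rightarrow> 'a mfun \<Rightarrow> 'a mfun" where
  "madd A B = (\<lambda>z i j. A z i j + B z i j)"

definition mdiff :: "'a mfun \<Rightarrow> 'a mfun \<Rightarrow> 'a mfun" where
  "mdiff A B = (\<lambda>z i j. A z i j - B z i j)"

definition mscale :: "complex \<Rightarrow> 'a mfun \<Rightarrow> 'a mfun" where
  "mscale c A = (\<lambda>z i j. c * A z i j)"

definition mmul :: "nat \<Rightarrow> 'a mfun \<Rightarrow> 'a mfun \<Rightarrow> 'a mfun" where
  "mmul m A B = (\<lambda>z i j. \<Sum>l<m. A z i l * B z l j)"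

definition madj :: "'a mfun \<Rightarrow> 'a mfun" where
  "madj A = (\<lambda>z i j. cnj (A z j i))"

definition munit :: "nat \<Rightarrow> nat \<Rightarrow> 'a mfun" where
  "munit m d = (\<lambda>z i j. if z \<in> XD d \<and> i = j \<and> i < m then 1 else 0)"

definition vecnorm :: "nat \<Rightarrow> (nat \<Rightarrow> complex) \<Rightarrow> real" where
  "vecnorm m v = sqrt (\<Sum>i<m. (cmod (v i))\<^sup>2)"

definition mat_opnorm :: "nat \<Rightarrow> (nat \<Rightarrow> nat \<Rightarrow> complex) \<Rightarrow> real" where
  "mat_opnorm m M = Sup {vecnorm m (\<lambda>i. \<Sum>j<m. M i j * v j) | v. vecnorm m v \<le> 1}"

definition mnorm :: "nat \<Rightarrow> nat \<Rightarrow> 'a mfun \<Rightarrow> real" where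
  "mnorm m d A = Sup ((\<lambda>z. mat_opnorm m (A z)) ` XD d)"

definition tracial_state :: "nat \<Rightarrow> nat \<Rightarrow> ('a::topological_space mfun \<Rightarrow> complex) \<Rightarrow> bool" where
  "tracial_state m d \<tau> \<longleftrightarrow>
     (\<forall>A\<in>MC m d. \<forall>B\<in>MC m d. \<tau> (madd A B) = \<tau> A + \<tau> B) \<and>
     (\<forall>c. \<forall>A\<in>MC m d. \<tau> (mscale c A) = c * \<tau> A) \<and>
     (\<forall>A\<in>MC m d. Im (\<tau> (mmul m (madj A) A)) = 0 \<and> 0 \<le> Re (\<tau> (mmul m (madj A) A))) \<and>
     \<tau> (munit m d) = 1 \<and>
     (\<forall>A\<in>MC m d. \<forall>B\<in>MC m d. \<tau> (mmul m A B) = \<tau> (mmul m B A))"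

definition unitary_el :: "nat \<Rightarrow> nat \<Rightarrow> 'a::topological_space mfun \<Rightarrow> bool" where
  "unitary_el m d u \<longleftrightarrow> u \<in> MC m d \<and> mmul m (madj u) u = munit m d \<and> mmul m u (madj u) = munit m d"

text \<open>The homomorphism f \<mapsto> diag(f\<circ>\<pi>_1,...,f\<circ>\<pi>_n, f(x_1),...,f(x_k)) into M_{n+k}(C(X^d)),
  where \<pi>_i(z) = z (p i) is the coordinate projection onto coordinate p i < d (0-indexed).\<close>
definition diag_hom :: "nat \<Rightarrow> nat \<Rightarrow> nat \<Rightarrow> (nat \<Rightarrow> nat) \<Rightarrow> (nat \<Rightarrow> 'a) \<Rightarrow> ('a \<Rightarrow> complex) \<Rightarrow> 'a mfun" where
  "diag_hom d n k p x f = (\<lambda>z i j. if z \<in> XD d \<and> i = j \<and> i < n + k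
       then (if i < n then f (z (p i)) else f (x (i - n))) else 0)"

end

theory Submission
  imports Defs
begin

text \<open>
  Choose \<open>\<eta>\<close> from the uniform continuity of \<open>F\<close> and a finite \<open>\<eta>/3\<close>-net \<open>C\<close> of \<open>X\<close>.
  For every set \<open>T\<close> of net points whose closed \<open>\<eta>/3\<close>-neighbourhood \<open>A\<^sub>T\<close> is not all
  of \<open>X\<close>, connectedness yields a point outside \<open>A\<^sub>T\<close> but close to it, hence a bump
  \<open>h\<^sub>T\<close> vanishing on \<open>A\<^sub>T\<close>, and a function \<open>K\<^sub>T \<ge> h\<^sub>T\<close> equal to \<open>1\<close> on \<open>A\<^sub>T\<close>
  and supported in the open \<open>\<eta>/3\<close>-neighbourhood of \<open>A\<^sub>T\<close>; these make up \<open>H0\<close> and \<open>H1\<close>.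
  Testing the hypotheses against the normalised trace at a diagonal point \<open>(c, \<dots>, c)\<close>
  with \<open>c \<in> T\<close> removes the \<open>n\<close> coordinate-projection entries and leaves
  \<open>\<Sum>\<^sub>j K\<^sub>T(x\<^sub>j) \<le> \<Sum>\<^sub>j K\<^sub>T(y\<^sub>j) + \<Sum>\<^sub>j h\<^sub>T(x\<^sub>j)\<close>. Taking for \<open>T\<close> the net points
  near \<open>{x\<^sub>i | i \<in> S}\<close>, this is Hall's condition for matching every \<open>x\<^sub>i\<close> with some
  \<open>y (\<sigma> i)\<close> at distance \<open>< \<eta>\<close>, and the permutation unitary of \<open>\<sigma>\<close> conjugates \<open>\<phi>\<^sub>1\<close>
  to within \<open>\<epsilon>\<close> of \<open>\<phi>\<^sub>0\<close>. Only positivity of \<open>\<Delta>\<close> and the lower bounds for \<open>\<phi>\<^sub>0\<close>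
  enter.
\<close>

section \<open>Hall's marriage theorem\<close>

definition hall_condition :: "('a \<Rightarrow> 'b \<Rightarrow> bool) \<Rightarrow> 'a set \<Rightarrow> 'b set \<Rightarrow> bool" where
  "hall_condition R A B \<longleftrightarrow> (\<forall>S\<subseteq>A. card S \<le> card {b\<in>B. \<exists>a\<in>S. R a b})"

definition matching_into :: "('a \<Rightarrow> 'b \<Rightarrow> bool) \<Rightarrow> 'a set \<Rightarrow> 'b set \<Rightarrow> ('a \<Rightarrow> 'b) \<Rightarrow> bool" where
  "matching_into R A B f \<longleftrightarrow> inj_on f A \<and> f ` A \<subseteq> B \<and> (\<forall>a\<in>A. R a (f a))"

lemma matching_into_Un:
  assumes "matching_into R A1 B1 f1" "matching_into R A2 (B - B1) f2" "B1 \<subseteq> B"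
  shows "matching_into R (A1 \<union> A2) B (\<lambda>a. if a \<in> A1 then f1 a else f2 a)"
  using assms unfolding matching_into_def inj_on_def by (simp add: subset_iff) blast

lemma hall_condition_subset:
  assumes "hall_condition R A B" "S \<subseteq> A"
  shows "hall_condition R S {b\<in>B. \<exists>a\<in>S. R a b}"
  unfolding hall_condition_def
proof (intro allI impI)
  fix S' assume "S' \<subseteq> S"
  then have "{b\<in>{b\<in>B. \<exists>a\<in>S. R a b}. \<exists>a\<in>S'. R a b} = {b\<in>B. \<exists>a\<in>S'. R a b}" by blast
  with assms \<open>S' \<subseteq> S\<close> show "card S' \<le> card {b\<in>{b\<in>B. \<exists>a\<in>S. R a b}. \<exists>a\<in>S'. R a b}"
    unfolding hall_condition_def by simp
qed

lemma hall_condition_critical_complement: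
  assumes "finite A" "finite B" "S \<subseteq> A" "hall_condition R A B"
    and critical: "card S = card {b\<in>B. \<exists>a\<in>S. R a b}"
  shows "hall_condition R (A - S) (B - {b\<in>B. \<exists>a\<in>S. R a b})"
  unfolding hall_condition_def
proof (intro allI impI)
  fix S' assume S': "S' \<subseteq> A - S"
  let ?N = "\<lambda>S. {b\<in>B. \<exists>a\<in>S. R a b}"
  have "card S' + card S = card (S' \<union> S)"
    using S' assms(1,3) by (intro card_Un_disjoint[symmetric]) (auto dest: finite_subset)
  also have "\<dots> \<le> card (?N (S' \<union> S))"
    using assms(3,4) S' unfolding hall_condition_def by (meson Diff_subset subset_trans Un_least)
  also have "\<dots> = card (?N (S' \<union> S) - ?N S) + card (?N S)"
  proof -
    have "?N S \<subseteq> ?N (S' \<union> S)" "finite (?N (S' \<union> S))" "finite (?N S)"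
      using assms(2) by auto
    then show ?thesis
      by (simp add: card_Diff_subset card_mono)
  qed
  also have "?N (S' \<union> S) - ?N S = {b\<in>B - ?N S. \<exists>a\<in>S'. R a b}"
    by auto
  finally show "card S' \<le> card {b\<in>B - ?N S. \<exists>a\<in>S'. R a b}"
    using critical by simp
qed

lemma hall_condition_remove_edge:
  assumes "finite B" "a \<in> A" "hall_condition R A B"
    and no_critical: "\<And>S. S \<subseteq> A \<Longrightarrow> S \<noteq> {} \<Longrightarrow> S \<noteq> A \<Longrightarrow> card S \<noteq> card {b\<in>B. \<exists>a\<in>S. R a b}"
  shows "hall_condition R (A - {a}) (B - {b})"
  unfolding hall_condition_def
proof (intro allI impI)
  fix S assume S: "S \<subseteq> A - {a}"
  let ?N = "{b\<in>B. \<exists>a\<in>S. R a b}"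
  show "card S \<le> card {b'\<in>B - {b}. \<exists>a\<in>S. R a b'}"
  proof (cases "S = {}")
    case False
    have "S \<subseteq> A" "S \<noteq> A" using S assms(2) by auto
    then have "card S \<le> card ?N" "card S \<noteq> card ?N"
      using assms(3) no_critical False unfolding hall_condition_def by blast+
    moreover have "card ?N \<le> card {b'\<in>B - {b}. \<exists>a\<in>S. R a b'} + 1"
    proof -
      have "{b'\<in>B - {b}. \<exists>a\<in>S. R a b'} = ?N - {b}" by blast
      then show ?thesis
        using assms(1) by (cases "b \<in> ?N") (auto simp: card_Diff_singleton_if)
    qed
    ultimately show ?thesis by linarith
  qed simp
qed

lemma matching_into_of_critical_subset:
  assumes IH: "\<And>A' B'. card A' < card A \<Longrightarrow> finite A' \<Longrightarrow> finite B' \<Longrightarrow> hall_condition R A' B' \<Longrightarrow>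
      \<exists>f. matching_into R A' B' f"
    and "finite A" "finite B" "hall_condition R A B" "S \<subseteq> A" "S \<noteq> {}" "S \<noteq> A"
    and critical: "card S = card {b\<in>B. \<exists>a\<in>S. R a b}"
  shows "\<exists>f. matching_into R A B f"
proof -
  define N where "N = {b\<in>B. \<exists>a\<in>S. R a b}"
  have "finite S" "N \<subseteq> B" using assms(2,5) finite_subset by (auto simp: N_def)
  have "card S < card A" "card (A - S) < card A"
    using assms(2,5-7) by (auto intro!: psubset_card_mono)
  moreover have "hall_condition R S N" "hall_condition R (A - S) (B - N)"
    using hall_condition_subset[OF assms(4,5)] hall_condition_critical_complement[OF assms(2,3,5,4) critical]
    by (simp_all add: N_def)
  ultimately obtain f1 f2 where "matching_into R S N f1" "matching_into R (A - S) (B - N) f2"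
    using IH \<open>finite S\<close> assms(2,3) \<open>N \<subseteq> B\<close> by (metis finite_Diff finite_subset)
  then have "matching_into R (S \<union> (A - S)) B (\<lambda>a. if a \<in> S then f1 a else f2 a)"
    using \<open>N \<subseteq> B\<close> by (rule matching_into_Un)
  moreover have "S \<union> (A - S) = A" using assms(5) by blast
  ultimately show ?thesis by metis
qed

lemma matching_into_of_no_critical_subset:
  assumes IH: "\<And>A' B'. card A' < card A \<Longrightarrow> finite A' \<Longrightarrow> finite B' \<Longrightarrow> hall_condition R A' B' \<Longrightarrow>
      \<exists>f. matching_into R A' B' f"
    and "finite A" "finite B" "hall_condition R A B" "a \<in> A"
    and no_critical: "\<And>S. S \<subseteq> A \<Longrightarrow> S \<noteq> {} \<Longrightarrow> S \<noteq> A \<Longrightarrow> card S \<noteq> card {b\<in>B. \<exists>a\<in>S. R a b}"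
  shows "\<exists>f. matching_into R A B f"
proof -
  have "card {a} \<le> card {b\<in>B. \<exists>a'\<in>{a}. R a' b}"
    using assms(4,5) unfolding hall_condition_def by blast
  then obtain b where b: "b \<in> B" "R a b"
    by (cases "{b\<in>B. R a b} = {}") auto
  have "card (A - {a}) < card A"
    using assms(2,5) by (rule card_Diff1_less)
  moreover have "hall_condition R (A - {a}) (B - {b})"
    using assms(3,5,4) no_critical by (rule hall_condition_remove_edge)
  ultimately obtain f where "matching_into R (A - {a}) (B - {b}) f"
    using IH assms(2,3) by blast
  moreover have "matching_into R {a} {b} (\<lambda>_. b)"
    using b by (simp add: matching_into_def)
  ultimately have "matching_into R ({a} \<union> (A - {a})) B (\<lambda>a'. if a' \<in> {a} then b else f a')"
    using b by (intro matching_into_Un) auto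
  moreover have "{a} \<union> (A - {a}) = A" using assms(5) by blast
  ultimately show ?thesis by metis
qed

theorem hall_marriage:
  assumes "finite A" "finite B" "hall_condition R A B"
  shows "\<exists>f. matching_into R A B f"
  using assms
proof (induction "card A" arbitrary: A B rule: less_induct)
  case less
  show ?case
  proof (cases "\<exists>S. S \<subseteq> A \<and> S \<noteq> {} \<and> S \<noteq> A \<and> card S = card {b\<in>B. \<exists>a\<in>S. R a b}")
    case True
    then obtain S where "S \<subseteq> A" "S \<noteq> {}" "S \<noteq> A" "card S = card {b\<in>B. \<exists>a\<in>S. R a b}"
      by blast
    from less.hyps less.prems this show ?thesis
      by (rule matching_into_of_critical_subset)
  next
    case no_critical: False
    show ?thesis
    proof (cases "A = {}")
      case True
      then show ?thesis by (auto simp: matching_into_def)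
    next
      case nonempty: False
      then obtain a where "a \<in> A" by blast
      have "card S \<noteq> card {b\<in>B. \<exists>a\<in>S. R a b}" if "S \<subseteq> A" "S \<noteq> {}" "S \<noteq> A" for S
        using no_critical that by blast
      with less.hyps less.prems \<open>a \<in> A\<close> show ?thesis
        by (rule matching_into_of_no_critical_subset)
    qed
  qed
qed

section \<open>Test pairs in compact connected metric spaces\<close>

lemma uniformly_equicontinuous_finite:
  fixes F :: "('a::metric_space \<Rightarrow> 'b::metric_space) set"
  assumes "compact S" "finite F" "\<And>f. f \<in> F \<Longrightarrow> continuous_on S f" "0 < e"
  shows "\<exists>\<eta>>0. \<forall>f\<in>F. \<forall>a\<in>S. \<forall>b\<in>S. dist a b < \<eta> \<longrightarrow> dist (f a) (f b) < e"
  using assms(2,3)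
proof (induction F rule: finite_induct)
  case empty
  show ?case using zero_less_one by blast
next
  case (insert f F)
  then obtain \<eta> where \<eta>: "0 < \<eta>" "\<forall>g\<in>F. \<forall>a\<in>S. \<forall>b\<in>S. dist a b < \<eta> \<longrightarrow> dist (g a) (g b) < e"
    by blast
  have "uniformly_continuous_on S f"
    using insert.prems assms(1) compact_uniformly_continuous by blast
  then obtain \<eta>' where "0 < \<eta>'" "\<forall>a\<in>S. \<forall>b\<in>S. dist a b < \<eta>' \<longrightarrow> dist (f a) (f b) < e"
    unfolding uniformly_continuous_on_def using assms(4) by metis
  with \<eta> show ?case
    by (intro exI[of _ "min \<eta> \<eta>'"]) auto
qed

lemma exists_point_near_closed:
  fixes A :: "'a::metric_space set"
  assumes "connected (UNIV :: 'a set)" "closed A" "A \<noteq> {}" "A \<noteq> UNIV" "0 < e"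
  obtains q where "q \<notin> A" "infdist q A < e"
proof -
  have "\<exists>q. q \<notin> A \<and> infdist q A < e"
  proof (rule ccontr)
    assume "\<nexists>q. q \<notin> A \<and> infdist q A < e"
    with assms(5) have "A = {q. infdist q A < e}" by auto
    moreover have "open {q. infdist q A < e}"
      by (intro open_Collect_less continuous_intros)
    ultimately show False
      using assms(1-4) unfolding connected_clopen by auto
  qed
  with that show ?thesis by blast
qed

text \<open>
  So \<open>\<Sum> K\<circ>x\<close> counts points of \<open>x\<close> in \<open>A\<close> from below, \<open>\<Sum> K\<circ>y\<close> counts points
  of \<open>y\<close> near \<open>A\<close> from above, and \<open>h\<close> absorbs the remaining points of \<open>x\<close>.
\<close>
definition test_pair :: "'a::metric_space set \<Rightarrow> real \<Rightarrow> ('a \<Rightarrow> real) \<Rightarrow> ('a \<Rightarrow> real) \<Rightarrow> bool" where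
  "test_pair A r h K \<longleftrightarrow> (\<forall>a\<in>A. h a = 0 \<and> K a = 1) \<and>
     (\<forall>q. 0 \<le> h q \<and> h q \<le> K q \<and> K q \<le> 1 \<and> (0 < K q \<longrightarrow> infdist q A < r))"

lemma exists_test_pair:
  fixes A :: "'a::metric_space set"
  assumes "connected (UNIV :: 'a set)" "closed A" "A \<noteq> {}" "A \<noteq> UNIV" "0 < r"
  obtains h K c where "test_pair A r h K" "continuous_on UNIV h" "continuous_on UNIV K" "h c = 1"
proof -
  obtain q where q: "q \<notin> A" "infdist q A < r / 2"
    using exists_point_near_closed[OF assms(1-4), of "r / 2"] assms(5) by auto
  define \<rho> where "\<rho> = min (r / 2) (infdist q A)"
  have "0 < \<rho>"
    using infdist_pos_not_in_closed[OF assms(2,3) q(1)] assms(5) by (simp add: \<rho>_def)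
  define h where "h p = max 0 (1 - dist p q / \<rho>)" for p
  define K where "K p = max (1 - infdist p A / r) (h p)" for p
  have "h a = 0" if "a \<in> A" for a
  proof -
    have "\<rho> \<le> dist a q"
      using infdist_le[OF that, of q] by (simp add: \<rho>_def dist_commute)
    with \<open>0 < \<rho>\<close> show ?thesis by (simp add: h_def)
  qed
  moreover have "infdist p A < r" if "0 < K p" for p
  proof (cases "0 < h p")
    case True
    then have "dist p q / \<rho> < 1"
      by (simp add: h_def max_def split: if_splits)
    with \<open>0 < \<rho>\<close> have "dist p q < \<rho>"
      by (simp add: divide_less_eq)
    then show ?thesis
      using infdist_triangle[of p A q] q(2) by (simp add: \<rho>_def)
  next
    case False
    with that have "0 < 1 - infdist p A / r" by (simp add: K_def h_def)
    with assms(5) show ?thesis by (simp add: field_simps)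
  qed
  ultimately have "test_pair A r h K"
    using assms(5) \<open>0 < \<rho>\<close> by (auto simp: test_pair_def K_def h_def infdist_nonneg)
  moreover have "continuous_on UNIV h" "continuous_on UNIV K"
    unfolding K_def h_def using \<open>0 < \<rho>\<close> assms(5) by (intro continuous_intros; simp)+
  moreover have "h q = 1"
    by (simp add: h_def)
  ultimately show ?thesis using that by blast
qed

lemma card_le_of_test_pair:
  assumes "finite I" "S \<subseteq> I" "N \<subseteq> I" "test_pair A r h K"
    and "\<And>j. j \<in> S \<Longrightarrow> x j \<in> A"
    and "\<And>j. j \<in> I \<Longrightarrow> infdist (y j) A < r \<Longrightarrow> j \<in> N"
    and sums: "(\<Sum>j\<in>I. K (x j)) \<le> (\<Sum>j\<in>I. K (y j)) + (\<Sum>j\<in>I. h (x j))"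
  shows "card S \<le> card N"
proof -
  have "real (card S) + (\<Sum>j\<in>I. h (x j)) = (\<Sum>j\<in>I. of_bool (j \<in> S) + h (x j))"
    using assms(1,2) by (simp add: sum.distrib Int_absorb1)
  also have "\<dots> \<le> (\<Sum>j\<in>I. K (x j))"
    using assms(4,5) by (intro sum_mono) (auto simp: test_pair_def)
  also have "\<dots> \<le> (\<Sum>j\<in>I. of_bool (j \<in> N)) + (\<Sum>j\<in>I. h (x j))"
  proof -
    have "K (y j) \<le> of_bool (j \<in> N)" if "j \<in> I" for j
      using assms(4) assms(6)[OF that] unfolding test_pair_def by (cases "0 < K (y j)") auto
    then have "(\<Sum>j\<in>I. K (y j)) \<le> (\<Sum>j\<in>I. of_bool (j \<in> N))"
      by (rule sum_mono)
    with sums show ?thesis by linarith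
  qed
  also have "(\<Sum>j\<in>I. of_bool (j \<in> N) :: real) = card N"
    using assms(1,3) by (simp add: Int_absorb1)
  finally show ?thesis by simp
qed

lemma infdist_UN_cball_less:
  assumes "T \<noteq> {}" "0 \<le> r" "infdist q (\<Union>c\<in>T. cball c r) < s"
  shows "\<exists>c\<in>T. dist c q < r + s"
proof -
  have "(\<Union>c\<in>T. cball c r) \<noteq> {}" "bdd_below (dist q ` (\<Union>c\<in>T. cball c r))"
    using assms(1,2) by (auto intro: bdd_belowI2[where m=0])
  then obtain c a where "c \<in> T" "dist c a \<le> r" "dist q a < s"
    using assms(3) by (auto simp: infdist_notempty cINF_less_iff)
  with dist_triangle[of c q a] have "dist c q < r + s"
    by (simp add: dist_commute)
  with \<open>c \<in> T\<close> show ?thesis by blast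
qed

lemma card_le_card_close_of_test_pairs:
  fixes x y :: "nat \<Rightarrow> 'a::metric_space"
  assumes "0 < r" "\<And>q. \<exists>c\<in>C. dist c q < r" "S \<subseteq> {..<k}"
    and test: "\<And>T. T \<subseteq> C \<Longrightarrow> T \<noteq> {} \<Longrightarrow> (\<Union>c\<in>T. cball c r) \<noteq> UNIV \<Longrightarrow>
      \<exists>h K. test_pair (\<Union>c\<in>T. cball c r) r h K \<and>
        (\<Sum>j<k. K (x j)) \<le> (\<Sum>j<k. K (y j)) + (\<Sum>j<k. h (x j))"
  shows "card S \<le> card {j\<in>{..<k}. \<exists>i\<in>S. dist (x i) (y j) < 3 * r}"
proof (cases "S = {}")
  case False
  define N where "N = {j\<in>{..<k}. \<exists>i\<in>S. dist (x i) (y j) < 3 * r}"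
  define T where "T = {c\<in>C. \<exists>i\<in>S. dist c (x i) < r}"
  define A where "A = (\<Union>c\<in>T. cball c r)"
  have x_in_A: "x i \<in> A" if "i \<in> S" for i
    using assms(2)[of "x i"] that by (force simp: A_def T_def)
  then have "T \<noteq> {}" using False by (auto simp: A_def)
  have close: "j \<in> N" if j: "j \<in> {..<k}" and near: "infdist (y j) A < r" for j
  proof -
    obtain c where "c \<in> T" "dist c (y j) < 2 * r"
      using infdist_UN_cball_less[OF \<open>T \<noteq> {}\<close>, of r "y j" r] assms(1) near by (auto simp: A_def)
    moreover from \<open>c \<in> T\<close> obtain i where "i \<in> S" "dist c (x i) < r" by (auto simp: T_def)
    ultimately have "dist (x i) (y j) < 3 * r"
      using dist_triangle[of "x i" "y j" c] by (simp add: dist_commute)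
    with \<open>i \<in> S\<close> j show ?thesis by (auto simp: N_def)
  qed
  show ?thesis
  proof (cases "A = UNIV")
    case True
    with close assms(1) have "N = {..<k}" by (auto simp: N_def)
    with card_mono[OF finite_lessThan assms(3)] show ?thesis by (simp add: N_def)
  next
    case False
    have "T \<subseteq> C" by (auto simp: T_def)
    with \<open>T \<noteq> {}\<close> obtain h K where pair: "test_pair A r h K"
      and sums: "(\<Sum>j<k. K (x j)) \<le> (\<Sum>j<k. K (y j)) + (\<Sum>j<k. h (x j))"
      using test[OF _ _ False[unfolded A_def]] unfolding A_def by blast
    have "N \<subseteq> {..<k}" by (auto simp: N_def)
    from card_le_of_test_pair[OF finite_lessThan assms(3) this pair x_in_A close sums]
    show ?thesis by (simp add: N_def)
  qed
qed simp

lemma matching_of_test_pairs: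
  fixes x y :: "nat \<Rightarrow> 'a::metric_space"
  assumes "0 < r" "\<And>q. \<exists>c\<in>C. dist c q < r"
    and test: "\<And>T. T \<subseteq> C \<Longrightarrow> T \<noteq> {} \<Longrightarrow> (\<Union>c\<in>T. cball c r) \<noteq> UNIV \<Longrightarrow>
      \<exists>h K. test_pair (\<Union>c\<in>T. cball c r) r h K \<and>
        (\<Sum>j<k. K (x j)) \<le> (\<Sum>j<k. K (y j)) + (\<Sum>j<k. h (x j))"
  shows "\<exists>\<sigma>. bij_betw \<sigma> {..<k} {..<k} \<and> (\<forall>j<k. dist (x j) (y (\<sigma> j)) < 3 * r)"
proof -
  let ?R = "\<lambda>i j. dist (x i) (y j) < 3 * r"
  have "hall_condition ?R {..<k} {..<k}"
    unfolding hall_condition_def using card_le_card_close_of_test_pairs[OF assms(1,2) _ test] by blast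
  then obtain \<sigma> where "matching_into ?R {..<k} {..<k} \<sigma>"
    using hall_marriage[of "{..<k}" "{..<k}" ?R] by blast
  then have "inj_on \<sigma> {..<k}" "\<sigma> ` {..<k} \<subseteq> {..<k}" "\<forall>j<k. ?R j (\<sigma> j)"
    unfolding matching_into_def by auto
  then show ?thesis
    by (auto simp: bij_betw_def endo_inj_surj)
qed

section \<open>Point traces and permutation unitaries\<close>

definition point_trace :: "nat \<Rightarrow> (nat \<Rightarrow> 'a) \<Rightarrow> 'a mfun \<Rightarrow> complex" where
  "point_trace m z A = (\<Sum>i<m. A z i i) / of_nat m"

lemma tracial_state_point_trace:
  assumes "0 < m" "z \<in> XD d"
  shows "tracial_state m d (point_trace m z)"
proof -
  have cnj_mult_self: "cnj a * a = of_real ((cmod a)\<^sup>2)" for a :: complex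
    by (metis complex_norm_square mult.commute)
  have "point_trace m z (mmul m (madj A) A) = of_real ((\<Sum>i<m. \<Sum>l<m. (cmod (A z l i))\<^sup>2) / real m)"
    for A :: "'a mfun"
    unfolding point_trace_def mmul_def madj_def by (simp add: cnj_mult_self)
  moreover have "point_trace m z (mmul m A B) = point_trace m z (mmul m B A)" for A B :: "'a mfun"
    unfolding point_trace_def mmul_def using sum.swap[of "\<lambda>i l. A z i l * B z l i" "{..<m}" "{..<m}"]
    by (simp add: mult.commute)
  ultimately show ?thesis
    using assms unfolding tracial_state_def
    by (simp add: point_trace_def madd_def mscale_def munit_def sum.distrib add_divide_distrib
        sum_distrib_left sum_nonneg)
qed

definition diag_point :: "nat \<Rightarrow> 'a \<Rightarrow> nat \<Rightarrow> 'a" where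
  "diag_point d c = restrict (\<lambda>_. c) {..<d}"

lemma diag_point_in_XD: "diag_point d c \<in> XD d"
  unfolding XD_def diag_point_def by simp

lemma diag_point_apply: "j < d \<Longrightarrow> diag_point d c j = c"
  unfolding diag_point_def by simp

lemma point_trace_diag_hom:
  assumes "\<forall>i<n. p i < d"
  shows "point_trace (n + k) (diag_point d c) (diag_hom d n k p x f)
    = (of_nat n * f c + (\<Sum>j<k. f (x j))) / of_nat (n + k)"
proof -
  let ?D = "\<lambda>i. diag_hom d n k p x f (diag_point d c) i i"
  have "(\<Sum>i<n + k'. g i) = (\<Sum>i<n. g i) + (\<Sum>j<k'. g (n + j))" for g :: "nat \<Rightarrow> complex" and k'
    by (induction k') (simp_all add: ac_simps)
  then have "(\<Sum>i<n + k. ?D i) = (\<Sum>i<n. ?D i) + (\<Sum>j<k. ?D (n + j))" .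
  also have "(\<Sum>i<n. ?D i) = (\<Sum>i<n. f c)"
    by (rule sum.cong) (use assms in \<open>auto simp: diag_hom_def diag_point_in_XD diag_point_apply\<close>)
  also have "(\<Sum>j<k. ?D (n + j)) = (\<Sum>j<k. f (x j))"
    by (rule sum.cong) (auto simp: diag_hom_def diag_point_in_XD)
  finally show ?thesis unfolding point_trace_def by simp
qed

lemma point_trace_mdiff: "point_trace m z (mdiff A B) = point_trace m z A - point_trace m z B"
  unfolding point_trace_def mdiff_def by (simp add: sum_subtractf diff_divide_distrib)

text \<open>
  At the diagonal point \<open>(c, \<dots>, c)\<close> the first \<open>n\<close> diagonal entries all equal \<open>f c\<close>: they
  vanish for \<open>h\<close> since \<open>h c = 0\<close>, and cancel in the difference for \<open>K\<close>.
\<close>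
lemma sum_le_of_trace_bounds:
  fixes h K :: "'a::topological_space \<Rightarrow> real"
  assumes "\<forall>i<n. p i < d" "0 < n + k" "h c = 0"
    and lower: "\<And>\<tau>. tracial_state (n + k) d \<tau> \<Longrightarrow>
      \<delta> \<le> Re (\<tau> (diag_hom d n k p x (\<lambda>q. of_real (h q))))"
    and upper: "\<And>\<tau>. tracial_state (n + k) d \<tau> \<Longrightarrow>
      cmod (\<tau> (mdiff (diag_hom d n k p x (\<lambda>q. of_real (K q))) (diag_hom d n k p y (\<lambda>q. of_real (K q))))) \<le> \<delta>"
  shows "(\<Sum>j<k. K (x j)) \<le> (\<Sum>j<k. K (y j)) + (\<Sum>j<k. h (x j))"
proof -
  define \<tau> where "\<tau> = point_trace (n + k) (diag_point d c :: nat \<Rightarrow> 'a)"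
  have \<tau>: "tracial_state (n + k) d \<tau>"
    unfolding \<tau>_def using assms(2) diag_point_in_XD by (rule tracial_state_point_trace)
  have "\<tau> (diag_hom d n k p x (\<lambda>q. of_real (h q))) = of_real ((\<Sum>j<k. h (x j)) / (n + k))"
    unfolding \<tau>_def point_trace_diag_hom[OF assms(1)] using assms(3) by simp
  with lower[OF \<tau>] have "\<delta> \<le> (\<Sum>j<k. h (x j)) / (n + k)" by simp
  moreover have "\<tau> (mdiff (diag_hom d n k p x (\<lambda>q. of_real (K q))) (diag_hom d n k p y (\<lambda>q. of_real (K q))))
      = of_real (((\<Sum>j<k. K (x j)) - (\<Sum>j<k. K (y j))) / (n + k))"
    unfolding \<tau>_def point_trace_mdiff point_trace_diag_hom[OF assms(1)]
    by (simp flip: diff_divide_distrib)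
  with upper[OF \<tau>] have "((\<Sum>j<k. K (x j)) - (\<Sum>j<k. K (y j))) / (n + k) \<le> \<delta>"
    by (metis abs_le_D1 norm_of_real)
  ultimately show ?thesis
    using assms(2) by (simp add: divide_right_mono field_simps)
qed

definition perm_matrix :: "nat \<Rightarrow> nat \<Rightarrow> (nat \<Rightarrow> nat) \<Rightarrow> 'a mfun" where
  "perm_matrix m d \<pi> = (\<lambda>z i j. if z \<in> XD d \<and> j < m \<and> i = \<pi> j then 1 else 0)"

lemma madj_perm_matrix_mmul:
  assumes "\<pi> ` {..<m} \<subseteq> {..<m}"
  shows "mmul m (madj (perm_matrix m d \<pi>)) D = (\<lambda>z i j. if z \<in> XD d \<and> i < m then D z (\<pi> i) j else 0)"
proof (intro ext)
  fix z i j
  have "mmul m (madj (perm_matrix m d \<pi>)) D z i j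
      = (\<Sum>l<m. if l = \<pi> i then (if z \<in> XD d \<and> i < m then D z (\<pi> i) j else 0) else 0)"
    unfolding mmul_def madj_def perm_matrix_def by (rule sum.cong) auto
  then show "mmul m (madj (perm_matrix m d \<pi>)) D z i j = (if z \<in> XD d \<and> i < m then D z (\<pi> i) j else 0)"
    using assms by auto
qed

lemma mmul_perm_matrix:
  assumes "\<pi> ` {..<m} \<subseteq> {..<m}"
  shows "mmul m D (perm_matrix m d \<pi>) = (\<lambda>z i j. if z \<in> XD d \<and> j < m then D z i (\<pi> j) else 0)"
proof (intro ext)
  fix z i j
  have "mmul m D (perm_matrix m d \<pi>) z i j
      = (\<Sum>l<m. if l = \<pi> j then (if z \<in> XD d \<and> j < m then D z i (\<pi> j) else 0) else 0)"
    unfolding mmul_def perm_matrix_def by (rule sum.cong) auto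
  then show "mmul m D (perm_matrix m d \<pi>) z i j = (if z \<in> XD d \<and> j < m then D z i (\<pi> j) else 0)"
    using assms by auto
qed

lemma madj_perm_matrix:
  assumes "bij_betw \<pi> {..<m} {..<m}"
  shows "madj (perm_matrix m d \<pi>) = perm_matrix m d (the_inv_into {..<m} \<pi>)"
proof (intro ext)
  fix z :: "nat \<Rightarrow> 'a" and i j
  have "i < m \<and> j = \<pi> i \<longleftrightarrow> j < m \<and> i = the_inv_into {..<m} \<pi> j"
    using bij_betw_apply[OF assms] bij_betw_apply[OF bij_betw_the_inv_into[OF assms]]
      the_inv_into_f_f[OF bij_betw_imp_inj_on[OF assms]] f_the_inv_into_f_bij_betw[OF assms]
    by auto
  then show "madj (perm_matrix m d \<pi>) z i j = perm_matrix m d (the_inv_into {..<m} \<pi>) z i j"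
    by (auto simp: madj_def perm_matrix_def)
qed

lemma madj_perm_matrix_mmul_self:
  assumes "bij_betw \<pi> {..<m} {..<m}"
  shows "mmul m (madj (perm_matrix m d \<pi>)) (perm_matrix m d \<pi>) = munit m d"
proof (intro ext)
  fix z :: "nat \<Rightarrow> 'a" and i j
  have "i < m \<and> j < m \<and> \<pi> i = \<pi> j \<longleftrightarrow> i < m \<and> i = j"
    using bij_betw_imp_inj_on[OF assms] unfolding inj_on_def by auto
  then show "mmul m (madj (perm_matrix m d \<pi>)) (perm_matrix m d \<pi>) z i j = munit m d z i j"
    unfolding madj_perm_matrix_mmul[OF bij_betw_imp_surj_on[OF assms, THEN equalityD1]]
    by (auto simp: perm_matrix_def munit_def)
qed

lemma unitary_perm_matrix:
  assumes "bij_betw \<pi> {..<m} {..<m}"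
  shows "unitary_el m d (perm_matrix m d \<pi> :: 'a::topological_space mfun)"
proof -
  have "perm_matrix m d \<pi> \<in> (MC m d :: 'a mfun set)"
    unfolding MC_def
  proof (intro CollectI conjI allI impI)
    fix i j
    show "continuous_on (XD d) (\<lambda>z. perm_matrix m d \<pi> z i j :: complex)"
      by (subst continuous_on_cong[OF refl, where g="\<lambda>_. if j < m \<and> i = \<pi> j then 1 else 0"])
        (simp_all add: perm_matrix_def)
  next
    fix z :: "nat \<Rightarrow> 'a" and i j
    assume "z \<notin> XD d \<or> m \<le> i \<or> m \<le> j"
    then show "perm_matrix m d \<pi> z i j = 0"
      using bij_betw_apply[OF assms] by (auto simp: perm_matrix_def not_less[symmetric])
  qed
  moreover have "mmul m (perm_matrix m d \<pi>) (madj (perm_matrix m d \<pi>)) = (munit m d :: 'a mfun)"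
    using madj_perm_matrix_mmul_self[OF bij_betw_the_inv_into[OF assms], of d]
    by (simp add: madj_perm_matrix[OF assms, symmetric] madj_def)
  ultimately show ?thesis
    using madj_perm_matrix_mmul_self[OF assms] unfolding unitary_el_def by blast
qed

definition shift_perm :: "nat \<Rightarrow> (nat \<Rightarrow> nat) \<Rightarrow> nat \<Rightarrow> nat" where
  "shift_perm n \<sigma> i = (if i < n then i else n + \<sigma> (i - n))"

lemma bij_betw_shift_perm:
  assumes "bij_betw \<sigma> {..<k} {..<k}"
  shows "bij_betw (shift_perm n \<sigma>) {..<n + k} {..<n + k}"
proof -
  have "inj_on (shift_perm n \<sigma>) {..<n + k}"
  proof (rule inj_onI)
    fix i j assume i: "i \<in> {..<n + k}" and j: "j \<in> {..<n + k}"
      and eq: "shift_perm n \<sigma> i = shift_perm n \<sigma> j"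
    show "i = j"
    proof (cases "i < n"; cases "j < n")
      assume "\<not> i < n" "\<not> j < n"
      with eq have "\<sigma> (i - n) = \<sigma> (j - n)" by (simp add: shift_perm_def)
      with i j \<open>\<not> i < n\<close> \<open>\<not> j < n\<close> have "i - n = j - n"
        using bij_betw_imp_inj_on[OF assms] by (auto dest: inj_onD)
      with \<open>\<not> i < n\<close> \<open>\<not> j < n\<close> show ?thesis by simp
    qed (use eq in \<open>auto simp: shift_perm_def\<close>)
  qed
  moreover have "shift_perm n \<sigma> ` {..<n + k} \<subseteq> {..<n + k}"
    using bij_betw_apply[OF assms] by (auto simp: shift_perm_def)
  ultimately show ?thesis
    by (simp add: bij_betw_def endo_inj_surj)
qed

lemma perm_matrix_conj_diag_hom:
  assumes "bij_betw \<sigma> {..<k} {..<k}"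
  shows "mmul (n + k) (mmul (n + k) (madj (perm_matrix (n + k) d (shift_perm n \<sigma>))) (diag_hom d n k p y f))
      (perm_matrix (n + k) d (shift_perm n \<sigma>)) = diag_hom d n k p (y \<circ> \<sigma>) f"
proof (intro ext)
  fix z :: "nat \<Rightarrow> 'a" and i j
  let ?\<pi> = "shift_perm n \<sigma>"
  have \<pi>: "bij_betw ?\<pi> {..<n + k} {..<n + k}"
    using assms(1) by (rule bij_betw_shift_perm)
  have "i < n + k \<and> j < n + k \<and> ?\<pi> i = ?\<pi> j \<longleftrightarrow> i < n + k \<and> i = j"
    using bij_betw_imp_inj_on[OF \<pi>] unfolding inj_on_def by auto
  moreover have "?\<pi> i < n \<longleftrightarrow> i < n" "i < n \<Longrightarrow> ?\<pi> i = i" "\<not> i < n \<Longrightarrow> ?\<pi> i - n = \<sigma> (i - n)"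
    by (auto simp: shift_perm_def)
  moreover have "i < n + k \<Longrightarrow> ?\<pi> i < n + k"
    using bij_betw_apply[OF \<pi>] by simp
  ultimately show "mmul (n + k) (mmul (n + k) (madj (perm_matrix (n + k) d ?\<pi>)) (diag_hom d n k p y f))
      (perm_matrix (n + k) d ?\<pi>) z i j = diag_hom d n k p (y \<circ> \<sigma>) f z i j"
    unfolding madj_perm_matrix_mmul[OF bij_betw_imp_surj_on[OF \<pi>, THEN equalityD1]]
      mmul_perm_matrix[OF bij_betw_imp_surj_on[OF \<pi>, THEN equalityD1]]
    by (auto simp: diag_hom_def)
qed

lemma mat_opnorm_diagonal_le:
  assumes "\<And>i j. i < m \<Longrightarrow> j < m \<Longrightarrow> i \<noteq> j \<Longrightarrow> M i j = 0"
    and "\<And>i. i < m \<Longrightarrow> cmod (M i i) \<le> b" "0 \<le> b"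
  shows "mat_opnorm m M \<le> b"
  unfolding mat_opnorm_def
proof (rule cSup_least)
  show "{vecnorm m (\<lambda>i. \<Sum>j<m. M i j * v j) |v. vecnorm m v \<le> 1} \<noteq> {}"
    by (auto simp: vecnorm_def intro!: exI[of _ "\<lambda>_. 0"])
next
  fix t assume "t \<in> {vecnorm m (\<lambda>i. \<Sum>j<m. M i j * v j) |v. vecnorm m v \<le> 1}"
  then obtain v where v: "vecnorm m v \<le> 1" and t: "t = vecnorm m (\<lambda>i. \<Sum>j<m. M i j * v j)"
    by blast
  have "(\<Sum>j<m. M i j * v j) = M i i * v i" if "i < m" for i
  proof -
    have "(\<Sum>j<m. M i j * v j) = (\<Sum>j<m. if j = i then M i i * v i else 0)"
      using that assms(1) by (intro sum.cong) auto
    then show ?thesis using that by simp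
  qed
  then have "t = sqrt (\<Sum>i<m. (cmod (M i i) * cmod (v i))\<^sup>2)"
    unfolding t vecnorm_def by (simp add: norm_mult)
  also have "\<dots> \<le> sqrt (\<Sum>i<m. (b * cmod (v i))\<^sup>2)"
    using assms(2) by (intro real_sqrt_le_mono sum_mono power_mono mult_right_mono) simp_all
  also have "\<dots> = b * vecnorm m v"
    unfolding vecnorm_def by (simp add: power_mult_distrib sum_distrib_left[symmetric] real_sqrt_mult assms(3))
  also have "\<dots> \<le> b"
    using v assms(3) by (simp add: mult_left_le)
  finally show "t \<le> b" .
qed

lemma mnorm_le:
  assumes "\<And>z. z \<in> XD d \<Longrightarrow> mat_opnorm m (A z) \<le> b"
  shows "mnorm m d A \<le> b"
proof -
  have "XD d \<noteq> {}"
    unfolding XD_def by (simp add: PiE_eq_empty_iff)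
  then show ?thesis
    unfolding mnorm_def using assms by (auto intro: cSup_least)
qed

lemma mnorm_mdiff_diag_hom_le:
  assumes "\<And>j. j < k \<Longrightarrow> cmod (f (x j) - f (y j)) \<le> b" "0 \<le> b"
  shows "mnorm (n + k) d (mdiff (diag_hom d n k p x f) (diag_hom d n k p y f)) \<le> b"
proof (rule mnorm_le, rule mat_opnorm_diagonal_le)
  fix z :: "nat \<Rightarrow> 'a" and i
  assume "z \<in> XD d" "i < n + k"
  then show "cmod (mdiff (diag_hom d n k p x f) (diag_hom d n k p y f) z i i) \<le> b"
    using assms by (auto simp: mdiff_def diag_hom_def)
qed (auto simp: mdiff_def diag_hom_def assms(2))

section \<open>Approximate unitary equivalence\<close>

definition test_family :: "(('a::topological_space \<Rightarrow> real) \<times> ('a \<Rightarrow> real)) set \<Rightarrow> bool" where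
  "test_family P \<longleftrightarrow> finite P \<and> (\<forall>h K. (h, K) \<in> P \<longrightarrow> continuous_on UNIV h \<and> continuous_on UNIV K \<and>
     (\<exists>c. h c = 1) \<and> (\<exists>c. h c = 0) \<and> (\<forall>q. 0 \<le> h q \<and> h q \<le> K q \<and> K q \<le> 1))"

lemma exists_test_pairs_for_subsets:
  fixes C :: "'a::metric_space set"
  assumes "connected (UNIV :: 'a set)" "finite C" "0 < r"
  obtains pair where "\<And>T. T \<subseteq> C \<Longrightarrow> T \<noteq> {} \<Longrightarrow> (\<Union>c\<in>T. cball c r) \<noteq> UNIV \<Longrightarrow>
    test_pair (\<Union>c\<in>T. cball c r) r (fst (pair T)) (snd (pair T)) \<and>
    continuous_on UNIV (fst (pair T)) \<and> continuous_on UNIV (snd (pair T)) \<and> (\<exists>c. fst (pair T) c = 1)"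
proof -
  have "\<forall>T\<in>{T. T \<subseteq> C \<and> T \<noteq> {} \<and> (\<Union>c\<in>T. cball c r) \<noteq> UNIV}.
      \<exists>hK. test_pair (\<Union>c\<in>T. cball c r) r (fst hK) (snd hK) \<and>
        continuous_on UNIV (fst hK) \<and> continuous_on UNIV (snd hK) \<and> (\<exists>c. fst hK c = 1)"
  proof
    fix T assume T: "T \<in> {T. T \<subseteq> C \<and> T \<noteq> {} \<and> (\<Union>c\<in>T. cball c r) \<noteq> UNIV}"
    then have "finite T" using assms(2) finite_subset by auto
    with T have "closed (\<Union>c\<in>T. cball c r)" "(\<Union>c\<in>T. cball c r) \<noteq> {}" "(\<Union>c\<in>T. cball c r) \<noteq> UNIV"
      using assms(3) by auto
    from exists_test_pair[OF assms(1) this assms(3)]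
    show "\<exists>hK. test_pair (\<Union>c\<in>T. cball c r) r (fst hK) (snd hK) \<and>
        continuous_on UNIV (fst hK) \<and> continuous_on UNIV (snd hK) \<and> (\<exists>c. fst hK c = 1)"
      by (metis fst_conv snd_conv)
  qed
  from bchoice[OF this] obtain pair where pair: "\<forall>T\<in>{T. T \<subseteq> C \<and> T \<noteq> {} \<and> (\<Union>c\<in>T. cball c r) \<noteq> UNIV}.
      test_pair (\<Union>c\<in>T. cball c r) r (fst (pair T)) (snd (pair T)) \<and>
      continuous_on UNIV (fst (pair T)) \<and> continuous_on UNIV (snd (pair T)) \<and> (\<exists>c. fst (pair T) c = 1)"
    by blast
  show ?thesis
    by (intro that[of pair]) (use pair in simp)
qed

lemma exists_matching_test_pairs:
  assumes "compact (UNIV :: 'a set)" "connected (UNIV :: 'a set)" "0 < \<eta>"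
  obtains P :: "(('a::metric_space \<Rightarrow> real) \<times> ('a \<Rightarrow> real)) set"
  where "test_family P"
    and "\<And>k (x :: nat \<Rightarrow> 'a) y. (\<And>h K. (h, K) \<in> P \<Longrightarrow>
           (\<Sum>j<k. K (x j)) \<le> (\<Sum>j<k. K (y j)) + (\<Sum>j<k. h (x j))) \<Longrightarrow>
         \<exists>\<sigma>. bij_betw \<sigma> {..<k} {..<k} \<and> (\<forall>j<k. dist (x j) (y (\<sigma> j)) < \<eta>)"
proof -
  define r where "r = \<eta> / 3"
  have "0 < r" using assms(3) by (simp add: r_def)
  obtain C :: "'a set" where "finite C" and cover: "UNIV \<subseteq> (\<Union>c\<in>C. ball c r)"
    using seq_compact_imp_totally_bounded[OF compact_imp_seq_compact[OF assms(1)]] \<open>0 < r\<close> by blast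
  have C: "\<exists>c\<in>C. dist c q < r" for q
    using subsetD[OF cover UNIV_I[of q]] by auto
  obtain pair where pair: "\<And>T. T \<subseteq> C \<Longrightarrow> T \<noteq> {} \<Longrightarrow> (\<Union>c\<in>T. cball c r) \<noteq> UNIV \<Longrightarrow>
      test_pair (\<Union>c\<in>T. cball c r) r (fst (pair T)) (snd (pair T)) \<and>
      continuous_on UNIV (fst (pair T)) \<and> continuous_on UNIV (snd (pair T)) \<and> (\<exists>c. fst (pair T) c = 1)"
    by (fact exists_test_pairs_for_subsets[OF assms(2) \<open>finite C\<close> \<open>0 < r\<close>])
  define \<T> where "\<T> = {T. T \<subseteq> C \<and> T \<noteq> {} \<and> (\<Union>c\<in>T. cball c r) \<noteq> UNIV}"
  show ?thesis
  proof (rule that[of "pair ` \<T>"])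
    have "continuous_on UNIV h \<and> continuous_on UNIV K \<and>
        (\<exists>c. h c = 1) \<and> (\<exists>c. h c = 0) \<and> (\<forall>q. 0 \<le> h q \<and> h q \<le> K q \<and> K q \<le> 1)"
      if "(h, K) \<in> pair ` \<T>" for h K
    proof -
      from that obtain T where "T \<in> \<T>" and hK: "pair T = (h, K)" by auto
      then have T: "T \<subseteq> C" "T \<noteq> {}" "(\<Union>c\<in>T. cball c r) \<noteq> UNIV" by (auto simp: \<T>_def)
      with pair[OF T] hK have hK_props: "test_pair (\<Union>c\<in>T. cball c r) r h K" "continuous_on UNIV h"
        "continuous_on UNIV K" "\<exists>c. h c = 1"
        by auto
      moreover from T(2) obtain c where "c \<in> T" by blast
      ultimately have "h c = 0"
        using \<open>0 < r\<close> unfolding test_pair_def by auto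
      with hK_props show ?thesis
        unfolding test_pair_def by blast
    qed
    with \<open>finite C\<close> show "test_family (pair ` \<T>)"
      unfolding test_family_def \<T>_def by simp
  next
    fix k and x y :: "nat \<Rightarrow> 'a"
    assume sums: "\<And>h K. (h, K) \<in> pair ` \<T> \<Longrightarrow>
      (\<Sum>j<k. K (x j)) \<le> (\<Sum>j<k. K (y j)) + (\<Sum>j<k. h (x j))"
    have "\<exists>\<sigma>. bij_betw \<sigma> {..<k} {..<k} \<and> (\<forall>j<k. dist (x j) (y (\<sigma> j)) < 3 * r)"
    proof (rule matching_of_test_pairs[OF \<open>0 < r\<close> C])
      fix T assume T: "T \<subseteq> C" "T \<noteq> {}" "(\<Union>c\<in>T. cball c r) \<noteq> UNIV"
      then have "(fst (pair T), snd (pair T)) \<in> pair ` \<T>" by (simp add: \<T>_def)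
      with pair[OF T] sums show "\<exists>h K. test_pair (\<Union>c\<in>T. cball c r) r h K \<and>
          (\<Sum>j<k. K (x j)) \<le> (\<Sum>j<k. K (y j)) + (\<Sum>j<k. h (x j))"
        by blast
    qed
    then show "\<exists>\<sigma>. bij_betw \<sigma> {..<k} {..<k} \<and> (\<forall>j<k. dist (x j) (y (\<sigma> j)) < \<eta>)"
      by (simp add: r_def)
  qed
qed

definition bump_tests :: "(('a \<Rightarrow> real) \<times> ('a \<Rightarrow> real)) set \<Rightarrow> ('a \<Rightarrow> complex) set" where
  "bump_tests P = (\<lambda>(h, K) q. complex_of_real (h q)) ` P"

definition neighbourhood_tests :: "(('a \<Rightarrow> real) \<times> ('a \<Rightarrow> real)) set \<Rightarrow> ('a \<Rightarrow> complex) set" where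
  "neighbourhood_tests P = (\<lambda>(h, K) q. complex_of_real (K q)) ` P"

lemma of_real_in_C1pos:
  assumes "continuous_on UNIV g" "\<And>q. 0 \<le> g q \<and> g q \<le> 1"
  shows "(\<lambda>q. complex_of_real (g q)) \<in> C1pos"
proof -
  have "continuous_on UNIV (\<lambda>q. complex_of_real (g q))"
    using assms(1) by (intro continuous_intros)
  with assms(2) show ?thesis
    unfolding C1pos_def by simp
qed

lemma test_family_in_C1pos:
  assumes "test_family P"
  shows "finite (bump_tests P)" "bump_tests P \<subseteq> C1pos" "\<forall>h\<in>bump_tests P. h \<noteq> (\<lambda>_. 0)"
    and "finite (neighbourhood_tests P)" "neighbourhood_tests P \<subseteq> C1pos"
proof -
  have "(\<lambda>q. complex_of_real (h q)) \<in> C1pos" "(\<lambda>q. complex_of_real (K q)) \<in> C1pos"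
    "(\<lambda>q. complex_of_real (h q)) \<noteq> (\<lambda>_. 0)" if "(h, K) \<in> P" for h K
  proof -
    from assms that obtain c where "continuous_on UNIV h" "continuous_on UNIV K" "h c = 1"
      and "\<forall>q. 0 \<le> h q \<and> h q \<le> K q \<and> K q \<le> 1" unfolding test_family_def by blast
    then show "(\<lambda>q. complex_of_real (h q)) \<in> C1pos" "(\<lambda>q. complex_of_real (K q)) \<in> C1pos"
      "(\<lambda>q. complex_of_real (h q)) \<noteq> (\<lambda>_. 0)"
      by (auto intro!: of_real_in_C1pos dest: fun_cong[of _ _ c] intro: order_trans)
  qed
  with assms show "finite (bump_tests P)" "bump_tests P \<subseteq> C1pos" "\<forall>h\<in>bump_tests P. h \<noteq> (\<lambda>_. 0)"
    "finite (neighbourhood_tests P)" "neighbourhood_tests P \<subseteq> C1pos"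
    by (auto simp: test_family_def bump_tests_def neighbourhood_tests_def)
qed

lemma conjugating_unitary_of_trace_bounds:
  fixes P :: "(('a::metric_space \<Rightarrow> real) \<times> ('a \<Rightarrow> real)) set" and x y :: "nat \<Rightarrow> 'a"
  assumes match: "(\<And>h K. (h, K) \<in> P \<Longrightarrow>
           (\<Sum>j<k. K (x j)) \<le> (\<Sum>j<k. K (y j)) + (\<Sum>j<k. h (x j))) \<Longrightarrow>
         \<exists>\<sigma>. bij_betw \<sigma> {..<k} {..<k} \<and> (\<forall>j<k. dist (x j) (y (\<sigma> j)) < \<eta>)"
    and "test_family P" "\<forall>i<n. p i < d" "0 < n + k"
    and lower: "\<And>h \<tau>. h \<in> bump_tests P \<Longrightarrow> tracial_state (n + k) d \<tau> \<Longrightarrow>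
      \<delta> \<le> Re (\<tau> (diag_hom d n k p x h))"
    and upper: "\<And>K \<tau>. K \<in> neighbourhood_tests P \<Longrightarrow> tracial_state (n + k) d \<tau> \<Longrightarrow>
      cmod (\<tau> (mdiff (diag_hom d n k p x K) (diag_hom d n k p y K))) \<le> \<delta>"
    and uniform: "\<And>f a b. f \<in> F \<Longrightarrow> dist a b < \<eta> \<Longrightarrow> cmod (f a - f b) \<le> e" and "0 \<le> e"
  shows "\<exists>u. unitary_el (n + k) d u \<and> (\<forall>f\<in>F. mnorm (n + k) d
           (mdiff (diag_hom d n k p x f) (mmul (n + k) (mmul (n + k) (madj u) (diag_hom d n k p y f)) u)) \<le> e)"
proof -
  have "(\<Sum>j<k. K (x j)) \<le> (\<Sum>j<k. K (y j)) + (\<Sum>j<k. h (x j))" if hK: "(h, K) \<in> P" for h K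
  proof -
    obtain c where "h c = 0" using assms(2) hK unfolding test_family_def by blast
    moreover have "(\<lambda>q. complex_of_real (h q)) \<in> bump_tests P" "(\<lambda>q. complex_of_real (K q)) \<in> neighbourhood_tests P"
      unfolding bump_tests_def neighbourhood_tests_def by (rule image_eqI[where x="(h, K)"], simp, fact hK)+
    ultimately show ?thesis
      using assms(3,4) lower upper by (intro sum_le_of_trace_bounds[where c=c])
  qed
  then obtain \<sigma> where \<sigma>: "bij_betw \<sigma> {..<k} {..<k}" "\<forall>j<k. dist (x j) (y (\<sigma> j)) < \<eta>"
    using match by blast
  let ?u = "perm_matrix (n + k) d (shift_perm n \<sigma>) :: 'a mfun"
  have "unitary_el (n + k) d ?u"
    by (rule unitary_perm_matrix[OF bij_betw_shift_perm[OF \<sigma>(1)]])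
  moreover have "mnorm (n + k) d
      (mdiff (diag_hom d n k p x f) (mmul (n + k) (mmul (n + k) (madj ?u) (diag_hom d n k p y f)) ?u)) \<le> e"
    if "f \<in> F" for f
    unfolding perm_matrix_conj_diag_hom[OF \<sigma>(1)]
    using uniform[OF that] \<sigma>(2) \<open>0 \<le> e\<close> by (intro mnorm_mdiff_diag_hom_le) auto
  ultimately show ?thesis by blast
qed

lemma exists_test_families_for_unitary_conjugacy:
  fixes \<Delta> :: "('a::metric_space \<Rightarrow> complex) \<Rightarrow> real" and F :: "('a \<Rightarrow> complex) set"
  assumes "compact (UNIV :: 'a set)" "connected (UNIV :: 'a set)" "\<forall>f\<in>C1pos. 0 < \<Delta> f"
    and "finite F" "F \<subseteq> CX" "0 < \<epsilon>"
  shows "\<exists>H0 H1 \<delta>. finite H0 \<and> H0 \<subseteq> C1pos \<and> (\<forall>h\<in>H0. h \<noteq> (\<lambda>_. 0)) \<and>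
       finite H1 \<and> H1 \<subseteq> C1pos \<and> \<delta> > 0 \<and>
       (\<forall>n k d (p :: nat \<Rightarrow> nat) (x :: nat \<Rightarrow> 'a) (y :: nat \<Rightarrow> 'a).
          1 \<le> n \<and> 1 \<le> k \<and> 1 \<le> d \<and> (\<forall>i<n. p i < d) \<and>
          (\<forall>h\<in>H0. \<forall>\<tau>. tracial_state (n + k) d \<tau> \<longrightarrow>
              Re (\<tau> (diag_hom d n k p x h)) > \<Delta> h \<and> Re (\<tau> (diag_hom d n k p y h)) > \<Delta> h) \<and>
          (\<forall>h\<in>H1. \<forall>\<tau>. tracial_state (n + k) d \<tau> \<longrightarrow>
              cmod (\<tau> (mdiff (diag_hom d n k p x h) (diag_hom d n k p y h))) < \<delta>)
          \<longrightarrow> (\<exists>u. unitary_el (n + k) d u \<and>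
                 (\<forall>f\<in>F. mnorm (n + k) d
                    (mdiff (diag_hom d n k p x f)
                       (mmul (n + k) (mmul (n + k) (madj u) (diag_hom d n k p y f)) u)) < \<epsilon>)))"
proof -
  have "continuous_on UNIV f" if "f \<in> F" for f
    using assms(5) that by (auto simp: CX_def)
  with uniformly_equicontinuous_finite[OF assms(1,4), of "\<epsilon> / 2"] assms(6)
  obtain \<eta> where "0 < \<eta>" and uniform: "\<forall>f\<in>F. \<forall>a\<in>UNIV. \<forall>b\<in>UNIV. dist a b < \<eta> \<longrightarrow> dist (f a) (f b) < \<epsilon> / 2"
    by auto
  obtain P :: "(('a \<Rightarrow> real) \<times> ('a \<Rightarrow> real)) set" where P: "test_family P"
    and match: "\<And>k (x :: nat \<Rightarrow> 'a) y. (\<And>h K. (h, K) \<in> P \<Longrightarrow>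
           (\<Sum>j<k. K (x j)) \<le> (\<Sum>j<k. K (y j)) + (\<Sum>j<k. h (x j))) \<Longrightarrow>
         \<exists>\<sigma>. bij_betw \<sigma> {..<k} {..<k} \<and> (\<forall>j<k. dist (x j) (y (\<sigma> j)) < \<eta>)"
    by (fact exists_matching_test_pairs[OF assms(1,2) \<open>0 < \<eta>\<close>])
  define \<delta> where "\<delta> = Min (insert 1 (\<Delta> ` bump_tests P))"
  note H = test_family_in_C1pos[OF P]
  then have "0 < \<delta>" and \<delta>: "\<And>h. h \<in> bump_tests P \<Longrightarrow> \<delta> \<le> \<Delta> h"
    using assms(3) by (auto simp: \<delta>_def)
  have conjugacy: "\<exists>u. unitary_el (n + k) d u \<and> (\<forall>f\<in>F. mnorm (n + k) d
      (mdiff (diag_hom d n k p x f) (mmul (n + k) (mmul (n + k) (madj u) (diag_hom d n k p y f)) u)) < \<epsilon>)"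
    if "1 \<le> n" "\<forall>i<n. p i < d"
      and lower: "\<forall>h\<in>bump_tests P. \<forall>\<tau>. tracial_state (n + k) d \<tau> \<longrightarrow> \<Delta> h < Re (\<tau> (diag_hom d n k p x h))"
      and upper: "\<forall>K\<in>neighbourhood_tests P. \<forall>\<tau>. tracial_state (n + k) d \<tau> \<longrightarrow>
        cmod (\<tau> (mdiff (diag_hom d n k p x K) (diag_hom d n k p y K))) < \<delta>"
    for n k d and p :: "nat \<Rightarrow> nat" and x y :: "nat \<Rightarrow> 'a"
  proof -
    have "\<exists>u. unitary_el (n + k) d u \<and> (\<forall>f\<in>F. mnorm (n + k) d
        (mdiff (diag_hom d n k p x f) (mmul (n + k) (mmul (n + k) (madj u) (diag_hom d n k p y f)) u)) \<le> \<epsilon> / 2)"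
    proof (rule conjugating_unitary_of_trace_bounds[OF match P])
      show "\<delta> \<le> Re (\<tau> (diag_hom d n k p x h))"
        if "h \<in> bump_tests P" "tracial_state (n + k) d \<tau>" for h and \<tau> :: "'a mfun \<Rightarrow> complex"
        using lower that \<delta>[OF that(1)] by force
      show "cmod (\<tau> (mdiff (diag_hom d n k p x K) (diag_hom d n k p y K))) \<le> \<delta>"
        if "K \<in> neighbourhood_tests P" "tracial_state (n + k) d \<tau>" for K and \<tau> :: "'a mfun \<Rightarrow> complex"
        using upper that by force
      show "cmod (f a - f b) \<le> \<epsilon> / 2" if "f \<in> F" "dist a b < \<eta>" for f a b
        using uniform that by (simp add: dist_norm less_imp_le)
    qed (use that(1,2) \<open>0 < \<epsilon>\<close> in auto)
    moreover have "\<epsilon> / 2 < \<epsilon>" using \<open>0 < \<epsilon>\<close> by simp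
    ultimately show ?thesis
      by (blast intro: le_less_trans)
  qed
  show ?thesis
    by (rule exI[of _ "bump_tests P"], rule exI[of _ "neighbourhood_tests P"], rule exI[of _ \<delta>],
        intro conjI H \<open>0 < \<delta>\<close> allI impI, elim conjE, rule conjugacy) blast+
qed

theorem theorem5p1:
  fixes \<Delta> :: "('a::metric_space \<Rightarrow> complex) \<Rightarrow> real"
  assumes "compact (UNIV :: 'a set)"
    and "connected (UNIV :: 'a set)"
    and "\<forall>f\<in>C1pos. 0 < \<Delta> f \<and> \<Delta> f \<le> 1"
    and "order_preserving_on_C1pos \<Delta>"
  shows "\<forall>F \<epsilon>. finite F \<and> F \<subseteq> CX \<and> \<epsilon> > 0 \<longrightarrow>
    (\<exists>H0 H1 \<delta>. finite H0 \<and> H0 \<subseteq> C1pos \<and> (\<forall>h\<in>H0. h \<noteq> (\<lambda>_. 0)) \<and>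
       finite H1 \<and> H1 \<subseteq> C1pos \<and> \<delta> > 0 \<and>
       (\<forall>n k d (p :: nat \<Rightarrow> nat) (x :: nat \<Rightarrow> 'a) (y :: nat \<Rightarrow> 'a).
          1 \<le> n \<and> 1 \<le> k \<and> 1 \<le> d \<and> (\<forall>i<n. p i < d) \<and>
          (\<forall>h\<in>H0. \<forall>\<tau>. tracial_state (n + k) d \<tau> \<longrightarrow>
              Re (\<tau> (diag_hom d n k p x h)) > \<Delta> h \<and> Re (\<tau> (diag_hom d n k p y h)) > \<Delta> h) \<and>
          (\<forall>h\<in>H1. \<forall>\<tau>. tracial_state (n + k) d \<tau> \<longrightarrow>
              cmod (\<tau> (mdiff (diag_hom d n k p x h) (diag_hom d n k p y h))) < \<delta>)
          \<longrightarrow> (\<exists>u. unitary_el (n + k) d u \<and>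
                 (\<forall>f\<in>F. mnorm (n + k) d
                    (mdiff (diag_hom d n k p x f)
                       (mmul (n + k) (mmul (n + k) (madj u) (diag_hom d n k p y f)) u)) < \<epsilon>))))"
  by (intro allI impI, elim conjE, rule exists_test_families_for_unitary_conjugacy[OF assms(1,2)])
    (use assms(3) in auto)

end
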